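(* Let $m\ge5$ with $m\equiv1\pmod4$, let $N=3^m-1$ and $v=\frac{3^m-1}{2}+3^{(m-1)/2}-1$. Then $\gcd(v,N)=1$, and for every integer $i$ with $0\le i\le\frac{3^{(m-1)/2}-1}{4}+2$, the $3$-weight of $v(1+2i)\bmod N$ is congruent to $1$ modulo $4$ (i.e. the $3$-adic digit vector of $v(1+2i)\bmod N$ lies in $S_1(m)$).
   Context: For an integer $i$, $i\bmod N$ is the unique $s\in\{0,\dots,N-1\}$ with $N\mid i-s$. For $0\le s\le 3^m-1$ with $3$-adic expansion $s=\sum_{j=0}^{m-1}s_j3^j$, $s_j\in\{0,1,2\}$, the $3$-weight is $\mathrm{wt}_3(s)=\sum_j s_j$. $S_j(m)=\{(i_0,\dots,i_{m-1})\in\{0,1,2\}^m:\sum i_k\equiv j\pmod 4\}$. *)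

theory Defs
  imports Main
begin

definition digit3 :: "nat \<Rightarrow> nat \<Rightarrow> nat" where
  "digit3 s j = (s div 3 ^ j) mod 3"

definition digits3 :: "nat \<Rightarrow> nat \<Rightarrow> nat list" where
  "digits3 m s = map (digit3 s) [0..<m]"

definition wt3 :: "nat \<Rightarrow> nat \<Rightarrow> nat" where
  "wt3 m s = (\<Sum>j<m. digit3 s j)"

definition S_set :: "nat \<Rightarrow> nat \<Rightarrow> nat list set" where
  "S_set j m = {xs. length xs = m \<and> set xs \<subseteq> {0,1,2} \<and> sum_list xs mod 4 = j mod 4}"

end

(*
  Write m = 2k + 1 and a = 3^k = 4g + 1 (k is even). Then v (1 + 2i) is congruent mod N = 3a^2 - 1
  to a^2 + c (a - 1) with c = 2g + 2 + 2i, and this number is already smaller than N.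
  For c \<le> a its base-a digits are 1, c - 1, a - c; the last two add up to a - 1 = 22...2 (base 3),
  so their 3-weights add up to 2k and the total weight is 2k + 1, which is 1 mod 4 because k is even.
  The remaining even values c = a + 1, a + 3, a + 5 give the base-a digits (1, a - 1, a - 1),
  (2, 1, a - 3), (2, 3, a - 5), of weights 4k + 1, 2k + 1, 2k + 1.
  Coprimality follows from the Bezout relation (3g + 2) N = (6g + 3) v + 1.
*)
theory Submission
  imports Defs
begin

lemma wt3_0 [simp]: "wt3 0 x = 0"
  by (simp add: wt3_def)

lemma wt3_of_0 [simp]: "wt3 n 0 = 0"
  by (simp add: wt3_def digit3_def)

lemma digit3_Suc: "digit3 x (Suc j) = digit3 (x div 3) j"
  by (simp add: digit3_def div_mult2_eq mult.commute)

lemma wt3_Suc: "wt3 (Suc n) x = x mod 3 + wt3 n (x div 3)"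
  unfolding wt3_def sum.lessThan_Suc_shift digit3_Suc
  by (simp add: digit3_def)

lemma wt3_add_mult_power:
  "x < 3 ^ p \<Longrightarrow> wt3 (p + q) (x + 3 ^ p * y) = wt3 p x + wt3 q y"
proof (induction p arbitrary: x)
  case 0
  then show ?case by simp
next
  case (Suc p)
  have "(x + 3 ^ Suc p * y) mod 3 = x mod 3"
    by (simp add: mult.assoc)
  moreover have "(x + 3 ^ Suc p * y) div 3 = x div 3 + 3 ^ p * y"
    by simp
  moreover have "x div 3 < 3 ^ p"
    using Suc.prems by simp
  ultimately show ?case
    using Suc.IH[of "x div 3"] by (simp add: wt3_Suc)
qed

lemma wt3_add_mult_3: "r < 3 \<Longrightarrow> wt3 (Suc n) (r + 3 * q) = r + wt3 n q"
  using wt3_add_mult_power[of r 1 n q] by (simp add: wt3_Suc)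

lemma wt3_three_blocks:
  assumes "y < 3 ^ k" "w < 3 ^ k"
  shows "wt3 (2 * k + 1) (y + 3 ^ k * (w + 3 ^ k * e)) = wt3 k y + wt3 k w + e mod 3"
  using wt3_add_mult_power[OF assms(1), of "k + 1"] wt3_add_mult_power[OF assms(2), of 1]
  by (simp add: mult_2 wt3_Suc)

lemma wt3_extend: "x < 3 ^ n \<Longrightarrow> n \<le> n' \<Longrightarrow> wt3 n' x = wt3 n x"
  using wt3_add_mult_power[of x n "n' - n" 0] by simp

lemma wt3_complement:
  "x < 3 ^ n \<Longrightarrow> wt3 n x + wt3 n (3 ^ n - 1 - x) = 2 * n"
proof (induction n arbitrary: x)
  case 0
  then show ?case by simp
next
  case (Suc n)
  define q r where "q = x div 3" and "r = x mod 3"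
  have x: "x = r + 3 * q" and "r < 3" and "q < 3 ^ n"
    using Suc.prems by (auto simp: q_def r_def)
  then have "3 ^ Suc n - 1 - x = (2 - r) + 3 * (3 ^ n - 1 - q)"
    by (simp add: x diff_mult_distrib2)
  then have "wt3 (Suc n) (3 ^ Suc n - 1 - x) = (2 - r) + wt3 n (3 ^ n - 1 - q)"
    by (simp only: wt3_add_mult_3[of "2 - r"] diff_less_Suc)
  moreover have "wt3 (Suc n) x = r + wt3 n q"
    unfolding x using \<open>r < 3\<close> by (rule wt3_add_mult_3)
  ultimately show ?case
    using Suc.IH[OF \<open>q < 3 ^ n\<close>] \<open>r < 3\<close> by simp
qed

lemma digits3_in_S_set_iff: "digits3 m s \<in> S_set j m \<longleftrightarrow> wt3 m s mod 4 = j mod 4"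
proof -
  have "digit3 s i \<in> {0, 1, 2}" for i
    using mod_less_divisor[of 3 "s div 3 ^ i"] unfolding digit3_def by fastforce
  then have "set (digits3 m s) \<subseteq> {0, 1, 2}"
    unfolding digits3_def set_map image_subset_iff by blast
  moreover have "sum_list (digits3 m s) = wt3 m s"
    by (simp add: digits3_def wt3_def sum_list_sum_nth atLeast0LessThan)
  ultimately show ?thesis
    by (auto simp: S_set_def digits3_def)
qed

lemma wt3_small_values:
  assumes "2 \<le> k"
  shows "wt3 k 1 = 1" "wt3 k 2 = 2" "wt3 k 3 = 1" "wt3 k 4 = 2"
proof -
  have "(9::nat) \<le> 3 ^ k"
    using power_increasing[OF assms, of "3::nat"] by simp
  then have "wt3 k x = wt3 2 x" if "x \<le> 4" for x
    using that assms by (intro wt3_extend) simp_all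
  then show "wt3 k 1 = 1" "wt3 k 2 = 2" "wt3 k 3 = 1" "wt3 k 4 = 2"
    by (simp_all add: wt3_def digit3_def numeral_2_eq_2)
qed

lemma wt3_square_add_mult_pred_mod_4:
  assumes k: "even k" "2 \<le> k" and c: "even c" "2 \<le> c" "c \<le> 3 ^ k + 5"
  shows "wt3 (2 * k + 1) (3 ^ (2 * k) + c * (3 ^ k - 1)) mod 4 = 1"
proof -
  define a :: nat where "a = 3 ^ k"
  have "odd a"
    by (simp add: a_def)
  have "9 \<le> a"
    using power_increasing[OF k(2), of "3::nat"] by (simp add: a_def)
  then have "a = (a - 5) + 5"
    by simp
  then obtain b where b: "a = b + 5"
    by blast
  have blocks: "wt3 (2 * k + 1) (y + a * (w + a * e)) = wt3 k y + wt3 k w + e mod 3"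
    if "y < a" "w < a" for y w e
    using wt3_three_blocks that by (simp add: a_def)
  have compl: "wt3 k x + wt3 k (a - 1 - x) = 2 * k" if "x < a" for x
    using wt3_complement[of x k] that by (simp add: a_def)
  note small = wt3_small_values[OF k(2)]
  have "wt3 (2 * k + 1) (a * a + c * (a - 1)) \<in> {2 * k + 1, 4 * k + 1}"
  proof -
    have "c \<le> a \<or> c = a + 1 \<or> c = a + 2 \<or> c = a + 3 \<or> c = a + 4 \<or> c = a + 5"
      using c(3) by (simp add: a_def) linarith
    then consider "c \<le> a" | "c = a + 1" | "c = a + 3" | "c = a + 5"
      using c(1) \<open>odd a\<close> by auto
    then show ?thesis
    proof cases
      case 1
      obtain d where "a = c + d"
        using 1 le_Suc_ex by blast
      moreover obtain e where "c = Suc e"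
        using c(2) by (cases c) auto
      ultimately have "a * a + c * (a - 1) = (a - 1 - e) + a * (e + a * 1)"
        by (simp add: algebra_simps)
      moreover have "e < a"
        using 1 \<open>c = Suc e\<close> by simp
      ultimately show ?thesis
        using blocks[of "a - 1 - e" e 1] compl[of e] by simp
    next
      case 2
      then have "a * a + c * (a - 1) = (a - 1) + a * ((a - 1) + a * 1)"
        using b by (simp add: algebra_simps)
      then show ?thesis
        using \<open>9 \<le> a\<close> blocks[of "a - 1" "a - 1" 1] compl[of 0] by simp
    next
      case 3
      then have "a * a + c * (a - 1) = (a - 1 - 2) + a * (1 + a * 2)"
        using b by (simp add: algebra_simps)
      then show ?thesis
        using \<open>9 \<le> a\<close> k(2) blocks[of "a - 1 - 2" 1 2] compl[of 2] small by simp
    next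
      case 4
      then have "a * a + c * (a - 1) = (a - 1 - 4) + a * (3 + a * 2)"
        using b by (simp add: algebra_simps)
      then show ?thesis
        using \<open>9 \<le> a\<close> k(2) blocks[of "a - 1 - 4" 3 2] compl[of 4] small by simp
    qed
  qed
  moreover have "3 ^ (2 * k) = a * a"
    by (simp add: a_def power_mult power2_eq_square mult.commute)
  ultimately show ?thesis
    using k(1) by (auto simp: a_def)
qed

lemma mult_odd_mod_three_sq_pred:
  fixes a g i :: nat
  assumes a: "a = 4 * g + 1" and i: "i \<le> g + 2"
  shows "((3 * a ^ 2 - 1) div 2 + a - 1) * (1 + 2 * i) mod (3 * a ^ 2 - 1)
    = a ^ 2 + (2 * g + 2 + 2 * i) * (a - 1)"
proof -
  have N: "3 * a ^ 2 - 1 = 48 * g\<^sup>2 + 24 * g + 2"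
    and v: "(3 * a ^ 2 - 1) div 2 + a - 1 = 24 * g\<^sup>2 + 16 * g + 1"
    and s: "a ^ 2 + (2 * g + 2 + 2 * i) * (a - 1) = 24 * g\<^sup>2 + 16 * g + 1 + 8 * (g * i)"
    by (simp_all add: a power2_eq_square algebra_simps)
  have "g * i \<le> g * g + 2 * g"
    using mult_le_mono2[OF i, of g] by (simp add: algebra_simps)
  moreover have "g \<le> g * g"
    by simp
  ultimately have lt: "24 * g\<^sup>2 + 16 * g + 1 + 8 * (g * i) < 48 * g\<^sup>2 + 24 * g + 2"
    unfolding power2_eq_square by linarith
  have eq: "(24 * g\<^sup>2 + 16 * g + 1) * (1 + 2 * i)
      = (24 * g\<^sup>2 + 16 * g + 1 + 8 * (g * i)) + i * (48 * g\<^sup>2 + 24 * g + 2)"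
    by (simp add: algebra_simps)
  show ?thesis
    unfolding v unfolding N s eq by (simp only: mod_mult_self1 mod_less[OF lt])
qed

lemma gcd_three_sq_pred:
  fixes a g :: nat
  assumes a: "a = 4 * g + 1"
  shows "gcd ((3 * a ^ 2 - 1) div 2 + a - 1) (3 * a ^ 2 - 1) = 1"
proof -
  define v N where "v = (3 * a ^ 2 - 1) div 2 + a - 1" and "N = 3 * a ^ 2 - 1"
  have "(3 * g + 2) * N = (6 * g + 3) * v + 1"
    by (simp add: v_def N_def a power2_eq_square algebra_simps)
  then have "gcd v N dvd (6 * g + 3) * v + 1"
    by (metis dvd_mult gcd_dvd2)
  moreover have "gcd v N dvd (6 * g + 3) * v"
    by simp
  ultimately have "gcd v N dvd 1"
    using dvd_add_right_iff by blast
  then show ?thesis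
    by (simp add: v_def N_def)
qed

theorem lemma40:
  fixes m :: nat
  assumes "m \<ge> 5" and "m mod 4 = 1"
  defines "N \<equiv> (3::nat) ^ m - 1"
  defines "v \<equiv> ((3::nat) ^ m - 1) div 2 + 3 ^ ((m - 1) div 2) - 1"
  shows "gcd v N = 1 \<and>
    (\<forall>i::nat. i \<le> ((3::nat) ^ ((m - 1) div 2) - 1) div 4 + 2 \<longrightarrow>
       wt3 m ((v * (1 + 2 * i)) mod N) mod 4 = 1 \<and>
       digits3 m ((v * (1 + 2 * i)) mod N) \<in> S_set 1 m)"
proof -
  define k where "k = (m - 1) div 2"
  have m: "m = 2 * k + 1" and k: "even k" "2 \<le> k"
    using assms(1,2) unfolding k_def by presburger+
  define a :: nat where "a = 3 ^ k"
  have "a mod 4 = 1"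
    using k(1) by (auto simp: a_def power_mult power_mod[of 9, symmetric] elim!: evenE)
  then obtain g where a: "a = 4 * g + 1"
    by (metis div_mult_mod_eq add.commute mult.commute)
  have "3 ^ m = 3 * a ^ 2"
    by (simp add: m a_def power_add power_mult mult.commute)
  then have N: "N = 3 * a ^ 2 - 1" and v: "v = (3 * a ^ 2 - 1) div 2 + a - 1"
    unfolding N_def v_def k_def[symmetric] a_def[symmetric] by simp_all
  have "wt3 m (v * (1 + 2 * i) mod N) mod 4 = 1" if "i \<le> g + 2" for i
  proof -
    have "v * (1 + 2 * i) mod N = 3 ^ (2 * k) + (2 * g + 2 + 2 * i) * (3 ^ k - 1)"
      using mult_odd_mod_three_sq_pred[OF a that]
      by (simp add: N v a_def power_mult power2_eq_square mult.commute)
    then show ?thesis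
      using wt3_square_add_mult_pred_mod_4[OF k, of "2 * g + 2 + 2 * i"] that
      by (simp add: m a_def[symmetric] a)
  qed
  moreover have "(3 ^ ((m - 1) div 2) - 1) div 4 + 2 = g + 2"
    unfolding k_def[symmetric] a_def[symmetric] a by simp
  ultimately show ?thesis
    using gcd_three_sq_pred[OF a] by (simp add: N v digits3_in_S_set_iff)
qed

end
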